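(* Let $p,q$ be relatively prime integers with $1\le q<p$, write $p^2/(pq-1)=[b_1,\dots,b_r]$ and $p^2/(p^2-pq+1)=[a_1,\dots,a_e]$ (all entries $\ge 2$), and let $(i(\delta),j(\delta))$ be the $\delta$-position of $[b_1,\dots,b_r]$. Then, starting from (a regular neighborhood of) the $\delta$-half linear chain corresponding to $p^2/(pq-1)$ and blowing up appropriately (finitely many times, at points of the configuration, taking total transforms), one obtains (a regular neighborhood of) the linear chain of $2$-spheres $$B_1 - B_2 - \cdots - B_r - C - A_e - A_{e-1} - \cdots - A_{j(\delta)+2}$$ with self-intersections $B_i\cdot B_i=-b_i$, $C\cdot C=-1$, $A_k\cdot A_k=-a_k$ (where the part $A_e,\dots,A_{j(\delta)+2}$ is empty if $j(\delta)+2>e$).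
   Context: Hirzebruch--Jung continued fractions: $[b_r]=b_r$ and $[b_i,\dots,b_r]=b_i-1/[b_{i+1},\dots,b_r]$; for coprime $1\le a<n$, $n/a=[b_1,\dots,b_r]$ uniquely with all $b_i\ge2$, and the linear chain corresponding to $n/a$ is a chain of $2$-spheres (or smooth rational curves) $S_1,\dots,S_r$, $S_i\cdot S_i=-b_i$, consecutive ones meeting transversally once, others disjoint. Riemenschneider's dot diagram of $[b_1,\dots,b_r]$: place $b_i-1$ dots in row $i$, the first dot of row $i$ directly under the last dot of row $i-1$; column $j$ then contains $a_j-1$ dots where $n/(n-a)=[a_1,\dots,a_e]$. For $p^2/(pq-1)=[b_1,\dots,b_r]$ one has $\sum_i(b_i-1)=2r+1$; the dot $\delta$ is the $(r+1)$-th dot in reading order (rows top to bottom, each left to right), and its $\delta$-position $(i(\delta),j(\delta))$ is its row and column. The $\delta$-half linear chain is the linear chain $[b_1,\dots,b_{i(\delta)-1},b'_{i(\delta)}]$ whose dot diagram consists of the dots in rows $1,\dots,i(\delta)$ and columns $1,\dots,j(\delta)$ of the original diagram; equivalently $b'_{i(\delta)}-1$ is the number of dots of row $i(\delta)$ up to and including $\delta$. *)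

theory Defs
  imports Complex_Main
begin

text \<open>Hirzebruch--Jung continued fraction [b_1,...,b_r] (value on [] is junk).\<close>
fun hj :: "nat list \<Rightarrow> rat" where
  "hj [] = 0"
| "hj [b] = of_nat b"
| "hj (b # c # bs) = of_nat b - 1 / hj (c # bs)"

text \<open>Dot diagram of [b_1,...,b_r] (0-based list bs).  Row i (0-based) has bs!i - 1 dots.
  dots_before bs i = number of dots in rows 0..i-1.\<close>
definition dots_before :: "nat list \<Rightarrow> nat \<Rightarrow> nat" where
  "dots_before bs i = (\<Sum>k<i. bs ! k - 1)"

text \<open>0-based row of the dot delta, the (r+1)-th dot in reading order; i(delta) = delta_row0 + 1.\<close>
definition delta_row0 :: "nat list \<Rightarrow> nat" where
  "delta_row0 bs = (LEAST i. length bs + 1 \<le> dots_before bs (Suc i))"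

definition delta_in_row :: "nat list \<Rightarrow> nat" where
  "delta_in_row bs = length bs + 1 - dots_before bs (delta_row0 bs)"

text \<open>Column j(delta) (1-based). Row i (0-based) starts in column 1 + sum_{k<i} (b_k - 2),
  since the first dot of a row sits under the last dot of the previous row.\<close>
definition delta_col :: "nat list \<Rightarrow> nat" where
  "delta_col bs = (\<Sum>k<delta_row0 bs. bs ! k - 2) + delta_in_row bs"

definition half_chain :: "nat list \<Rightarrow> nat list" where
  "half_chain bs = take (delta_row0 bs) bs @ [delta_in_row bs + 1]"

text \<open>Configurations of spheres / rational curves, recorded combinatorially as a plumbing graph:
  vertex set, self-intersection numbers, and edges (2-element sets = one transverse intersection).\<close>
type_synonym config = "nat set \<times> (nat \<Rightarrow> int) \<times> nat set set"

definition chain_config :: "nat list \<Rightarrow> config" where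
  "chain_config bs = ({0..<length bs}, (\<lambda>i. - int (bs ! i)),
                      {{i, Suc i} | i. Suc i < length bs})"

text \<open>One blow-up at a point of the configuration, taking the total transform:
  either at a point of a single curve v lying on no other curve, or at the intersection point of
  two curves v, v'.\<close>
inductive blowup_step :: "config \<Rightarrow> config \<Rightarrow> bool" where
  at_point: "v \<in> V \<Longrightarrow> u \<notin> V \<Longrightarrow>
     blowup_step (V, w, E) (insert u V, w(v := w v - 1, u := -1), insert {v, u} E)"
| at_intersection: "{v, v'} \<in> E \<Longrightarrow> v \<noteq> v' \<Longrightarrow> v \<in> V \<Longrightarrow> v' \<in> V \<Longrightarrow> u \<notin> V \<Longrightarrow>
     blowup_step (V, w, E)
       (insert u V, w(v := w v - 1, v' := w v' - 1, u := -1),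
        insert {v, u} (insert {u, v'} (E - {{v, v'}})))"

definition config_iso :: "config \<Rightarrow> config \<Rightarrow> bool" where
  "config_iso C D = (case C of (V, w, E) \<Rightarrow> case D of (V', w', E') \<Rightarrow>
     \<exists>f. bij_betw f V V' \<and> (\<forall>v\<in>V. w' (f v) = w v) \<and>
         (\<forall>a\<in>V. \<forall>b\<in>V. {a, b} \<in> E \<longleftrightarrow> {f a, f b} \<in> E'))"

end

theory Submission
  imports Defs
begin

text \<open>Encode a chain [b_1, ..., b_r] by the product of the matrices [[b_i, -1], [1, 0]]; its
  first column is (n, a) when n/a = [b_1, ..., b_r], so the chain is determined by the matrix.
  The chains of p^2/(pq - 1) are Wahl's chains, obtained from [4] by the moves
  [c, ...] \<mapsto> [c + 1, ..., 2] and [..., c] \<mapsto> [2, ..., c + 1]; along these moves their dot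
  diagram keeps 2r + 1 dots and the dot \<delta> is never the last dot of its row.

  Starting from the \<delta>-half chain, blow up a free point of its last curve and then, for the rest
  of row i(\<delta>) and for every later row b of the dot diagram, the nodes next to the new (-1)-curve:
  each row inserts b - 2 curves of square -2 after the (-1)-curve and lowers by one the square of
  the curve that followed it.  What grows behind the (-1)-curve is the reversed dual chain
  [a_e, ..., a_1] with its last j(\<delta>) + 1 entries missing.  Blow-ups at nodes do not change the
  matrix product, and the whole chain bs, 1, a_e, ..., a_1 has the matrix of [1, 1]; this gives
  Riemenschneider's duality n/(n - a) = [a_1, ..., a_e], which identifies the dual chain with the
  given one.\<close>

section \<open>Matrices of continued fractions\<close>

datatype mat2 = Mat2 int int int int

instantiation mat2 :: monoid_mult
begin

fun times_mat2 :: "mat2 \<Rightarrow> mat2 \<Rightarrow> mat2" where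
  "Mat2 a b c d * Mat2 e f g h = Mat2 (a*e + b*g) (a*f + b*h) (c*e + d*g) (c*f + d*h)"

definition one_mat2 :: mat2 where
  "1 = Mat2 1 0 0 1"

instance
proof
  fix x y z :: mat2
  show "x * y * z = x * (y * z)"
    by (cases x; cases y; cases z) (simp add: algebra_simps)
  show "1 * x = x" "x * 1 = x"
    by (cases x; simp add: one_mat2_def)+
qed

end

fun det2 :: "mat2 \<Rightarrow> int" where
  "det2 (Mat2 a b c d) = a * d - b * c"

fun adj2 :: "mat2 \<Rightarrow> mat2" where
  "adj2 (Mat2 a b c d) = Mat2 d (- b) (- c) a"

text \<open>rev2 X = J X^T J with J = diag(1, -1): an anti-automorphism fixing every hj_mat b.\<close>
fun rev2 :: "mat2 \<Rightarrow> mat2" where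
  "rev2 (Mat2 a b c d) = Mat2 a (- c) (- b) d"

lemma det2_mult: "det2 (X * Y) = det2 X * det2 Y"
  by (cases X; cases Y) (simp add: algebra_simps)

lemma adj2_mult_cancel: "det2 X = 1 \<Longrightarrow> adj2 X * (X * Y) = Y"
proof -
  assume "det2 X = 1"
  then have "adj2 X * X = 1"
    by (cases X) (simp add: one_mat2_def algebra_simps)
  then show ?thesis
    by (simp flip: mult.assoc)
qed

lemma rev2_mult: "rev2 (X * Y) = rev2 Y * rev2 X"
  by (cases X; cases Y) (simp add: algebra_simps)

definition hj_mat :: "nat \<Rightarrow> mat2" where
  "hj_mat b = Mat2 (int b) (-1) 1 0"

definition hj_prod :: "nat list \<Rightarrow> mat2" where
  "hj_prod bs = prod_list (map hj_mat bs)"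

lemma hj_prod_simps [simp]:
  "hj_prod [] = 1"
  "hj_prod (b # bs) = hj_mat b * hj_prod bs"
  "hj_prod (bs @ cs) = hj_prod bs * hj_prod cs"
  by (simp_all add: hj_prod_def)

lemma det2_hj_prod: "det2 (hj_prod bs) = 1"
  by (induction bs) (simp_all add: det2_mult hj_mat_def one_mat2_def)

lemma hj_prod_rev: "hj_prod (rev bs) = rev2 (hj_prod bs)"
  by (induction bs) (simp_all add: rev2_mult hj_mat_def one_mat2_def)

lemma hj_Cons: "bs \<noteq> [] \<Longrightarrow> hj (b # bs) = of_nat b - 1 / hj bs"
  by (cases bs) simp_all

lemma hj_prod_ratio:
  assumes "bs \<noteq> []" and "\<forall>b\<in>set bs. 2 \<le> b" and "hj_prod bs = Mat2 n u a v"
  shows "hj bs = of_int n / of_int a \<and> 1 \<le> a \<and> a < n"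
  using assms
proof (induction bs arbitrary: n u a v)
  case (Cons b bs)
  show ?case
  proof (cases "bs = []")
    case True
    with Cons.prems show ?thesis by (auto simp: hj_mat_def one_mat2_def)
  next
    case False
    obtain n' u' a' v' where bs: "hj_prod bs = Mat2 n' u' a' v'" by (cases "hj_prod bs")
    with Cons False have IH: "hj bs = of_int n' / of_int a'" "1 \<le> a'" "a' < n'" by auto
    have entries: "n = int b * n' - a'" "a = n'" using Cons.prems(3) bs by (auto simp: hj_mat_def)
    have "hj (b # bs) = of_nat b - of_int a' / of_int n'"
      using False IH by (simp add: hj_Cons)
    also have "\<dots> = of_int n / of_int a"
    proof -
      have "(of_int n :: rat) = of_nat b * of_int n' - of_int a'"
        using entries by simp
      then show ?thesis using IH entries(2) by (simp add: field_simps)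
    qed
    finally have "hj (b # bs) = of_int n / of_int a" .
    moreover have "a < n"
    proof -
      have "2 * n' \<le> int b * n'"
        using Cons.prems(2) IH by (intro mult_right_mono) auto
      then show ?thesis using IH entries by linarith
    qed
    ultimately show ?thesis using IH entries by simp
  qed
qed simp

lemma hj_gt_1: "bs \<noteq> [] \<Longrightarrow> \<forall>b\<in>set bs. 2 \<le> b \<Longrightarrow> 1 < hj bs"
  using hj_prod_ratio[of bs] by (cases "hj_prod bs") (auto simp: field_simps)

lemma hj_Cons_eq_hd_iff:
  "\<forall>c\<in>set bs. 2 \<le> c \<Longrightarrow> hj (b # bs) = of_nat b \<longleftrightarrow> bs = []"
  using hj_gt_1[of bs] by (cases "bs = []") (auto simp: hj_Cons)

lemma hj_ceiling:
  assumes "\<forall>c\<in>set (b # bs). 2 \<le> c"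
  shows "\<lceil>hj (b # bs)\<rceil> = int b"
proof (cases "bs = []")
  case False
  then have "0 < 1 / hj bs" "1 / hj bs < 1"
    using hj_gt_1[of bs] assms by simp_all
  with False show ?thesis
    by (intro ceiling_unique) (simp_all add: hj_Cons)
qed simp

lemma hj_inj:
  assumes "bs \<noteq> []" "\<forall>b\<in>set bs. 2 \<le> b" "cs \<noteq> []" "\<forall>c\<in>set cs. 2 \<le> c"
    and "hj bs = hj cs"
  shows "bs = cs"
  using assms
proof (induction bs arbitrary: cs)
  case (Cons b bs)
  then obtain c cs' where cs: "cs = c # cs'" by (cases cs) auto
  have "b = c"
    using hj_ceiling[of b bs] hj_ceiling[of c cs'] Cons.prems cs by simp
  moreover have "bs = [] \<longleftrightarrow> cs' = []"
    using hj_Cons_eq_hd_iff[of bs b] hj_Cons_eq_hd_iff[of cs' c] Cons.prems cs \<open>b = c\<close> by auto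
  moreover have "bs = cs'" if "bs \<noteq> []"
  proof -
    have "hj bs = hj cs'"
      using Cons.prems cs \<open>b = c\<close> \<open>bs = [] \<longleftrightarrow> cs' = []\<close> that by (simp add: hj_Cons)
    then show ?thesis
      using Cons.IH[of cs'] Cons.prems cs that \<open>bs = [] \<longleftrightarrow> cs' = []\<close> by auto
  qed
  ultimately show ?case using cs by auto
qed simp

section \<open>Wahl chains\<close>

definition wahl_matrix :: "int \<Rightarrow> int \<Rightarrow> mat2" where
  "wahl_matrix p q = Mat2 (p\<^sup>2) (- (p * (p - q) - 1)) (p * q - 1) (- (q * (p - q) - 1))"

definition dot_count :: "nat list \<Rightarrow> nat" where
  "dot_count bs = sum_list (map (\<lambda>b. b - 1) bs)"

lemma dot_count_simps [simp]:
  "dot_count [] = 0"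
  "dot_count (b # bs) = (b - 1) + dot_count bs"
  "dot_count (bs @ cs) = dot_count bs + dot_count cs"
  by (simp_all add: dot_count_def)

text \<open>What the proof needs of the dot diagram of p^2/(pq - 1): it has 2r + 1 dots, and no row
  ends at the dot \<delta>.\<close>
definition wahl_dots :: "nat list \<Rightarrow> bool" where
  "wahl_dots bs \<longleftrightarrow> dot_count bs = 2 * length bs + 1 \<and>
     (\<forall>m. dot_count (take m bs) \<noteq> length bs + 1)"

lemma hj_prod_wahl_Cons_step:
  assumes "hj_prod (c # bs) = wahl_matrix (p - q) q"
  shows "hj_prod (Suc c # bs @ [2]) = wahl_matrix p q"
proof -
  have "hj_mat (Suc c) = Mat2 1 1 0 1 * hj_mat c"
    by (simp add: hj_mat_def)
  then have "hj_prod (Suc c # bs @ [2]) = Mat2 1 1 0 1 * hj_prod (c # bs) * hj_mat 2"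
    by (simp add: mult.assoc)
  then show ?thesis
    unfolding assms by (simp add: wahl_matrix_def hj_mat_def algebra_simps power2_eq_square)
qed

lemma hj_prod_wahl_snoc_step:
  assumes "hj_prod (bs @ [c]) = wahl_matrix q (2 * q - p)"
  shows "hj_prod (2 # bs @ [Suc c]) = wahl_matrix p q"
proof -
  have "hj_mat (Suc c) = hj_mat c * Mat2 1 0 (-1) 1"
    by (simp add: hj_mat_def)
  then have "hj_prod (2 # bs @ [Suc c]) = hj_mat 2 * hj_prod (bs @ [c]) * Mat2 1 0 (-1) 1"
    by (simp add: mult.assoc)
  then show ?thesis
    unfolding assms by (simp add: wahl_matrix_def hj_mat_def algebra_simps power2_eq_square)
qed

lemma wahl_dots_Cons_step:
  assumes "wahl_dots (c # bs)" and "2 \<le> c"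
  shows "wahl_dots (Suc c # bs @ [2])"
proof -
  have total: "(c - 1) + dot_count bs = 2 * length bs + 3"
    and prefix: "\<And>m. dot_count (take m (c # bs)) \<noteq> length bs + 2"
    using assms(1) by (simp_all add: wahl_dots_def)
  have "dot_count (take m (Suc c # bs @ [2])) \<noteq> length (Suc c # bs @ [2]) + 1" for m
  proof (cases m)
    case (Suc m')
    show ?thesis
    proof (cases "m' \<le> length bs")
      case True
      then show ?thesis using prefix[of m] Suc assms(2) by simp
    next
      case False
      then show ?thesis using Suc total assms(2) by simp
    qed
  qed simp
  then show ?thesis
    unfolding wahl_dots_def using total assms(2) by simp
qed

lemma wahl_dots_snoc_step:
  assumes "wahl_dots (bs @ [c])" and "2 \<le> c"
  shows "wahl_dots (2 # bs @ [Suc c])"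
proof -
  have total: "dot_count bs + (c - 1) = 2 * length bs + 3"
    and prefix: "\<And>m. dot_count (take m (bs @ [c])) \<noteq> length bs + 2"
    using assms(1) by (simp_all add: wahl_dots_def)
  have "dot_count (take m (2 # bs @ [Suc c])) \<noteq> length (2 # bs @ [Suc c]) + 1" for m
  proof (cases m)
    case (Suc m')
    show ?thesis
    proof (cases "m' \<le> length bs")
      case True
      then show ?thesis using prefix[of m'] Suc by simp
    next
      case False
      then show ?thesis using Suc total assms(2) by simp
    qed
  qed simp
  then show ?thesis
    unfolding wahl_dots_def using total assms(2) by simp
qed

text \<open>Induction along (p, q) \<mapsto> (q, 2q - p) or (p - q, q), ending at 4/1 = [4] for (p, q) = (2, 1).\<close>
lemma wahl_chain_exists:
  fixes p q :: nat
  assumes "coprime p q" and "1 \<le> q" and "q < p"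
  shows "\<exists>bs. bs \<noteq> [] \<and> (\<forall>b\<in>set bs. 2 \<le> b) \<and>
           hj_prod bs = wahl_matrix (int p) (int q) \<and> wahl_dots bs"
  using assms
proof (induction p arbitrary: q rule: less_induct)
  case (less p)
  consider "p = 2 * q" | "p < 2 * q" | "2 * q < p" by linarith
  then show ?case
  proof cases
    case 1
    then have "p = 2" "q = 1"
      using less.prems(1) by auto
    moreover have "dot_count (take m [4]) \<noteq> length [4::nat] + 1" for m
      by (cases m) simp_all
    ultimately show ?thesis
      by (intro exI[of _ "[4]"]) (simp add: wahl_matrix_def hj_mat_def one_mat2_def wahl_dots_def)
  next
    case 2
    have "2 * q - p = q - (p - q)"
      using 2 less.prems by linarith
    then have "gcd q (2 * q - p) = gcd (q - (p - q)) q"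
      by (simp add: gcd.commute)
    also have "\<dots> = gcd (p - q) q"
      using 2 by (intro gcd_diff2_nat) linarith
    also have "\<dots> = 1"
      using less.prems by (simp add: gcd_diff1_nat coprime_iff_gcd_eq_1)
    finally have "coprime q (2 * q - p)"
      by (simp add: coprime_iff_gcd_eq_1)
    moreover have "1 \<le> 2 * q - p" "2 * q - p < q"
      using 2 less.prems by linarith+
    ultimately obtain bs where bs: "bs \<noteq> []" "\<forall>b\<in>set bs. 2 \<le> b"
      "hj_prod bs = wahl_matrix (int q) (int (2 * q - p))" "wahl_dots bs"
      using less.IH less.prems by blast
    then obtain cs c where cs: "bs = cs @ [c]"
      by (cases bs rule: rev_cases) auto
    have "int (2 * q - p) = 2 * int q - int p"
      using 2 by simp
    then have "hj_prod (2 # cs @ [Suc c]) = wahl_matrix (int p) (int q)"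
      using bs(3) cs by (intro hj_prod_wahl_snoc_step) simp
    then show ?thesis
      using bs(2,4) cs wahl_dots_snoc_step[of cs c]
      by (intro exI[of _ "2 # cs @ [Suc c]"]) auto
  next
    case 3
    have "coprime (p - q) q"
      using less.prems by (simp add: coprime_iff_gcd_eq_1 gcd_diff1_nat)
    moreover have "p - q < p" "q < p - q"
      using 3 less.prems by linarith+
    ultimately obtain bs where bs: "bs \<noteq> []" "\<forall>b\<in>set bs. 2 \<le> b"
      "hj_prod bs = wahl_matrix (int (p - q)) (int q)" "wahl_dots bs"
      using less.IH less.prems by blast
    then obtain c cs where cs: "bs = c # cs"
      by (cases bs) auto
    have "hj_prod (Suc c # cs @ [2]) = wahl_matrix (int p) (int q)"
      using bs(3) cs less.prems(3) by (intro hj_prod_wahl_Cons_step) (simp add: of_nat_diff)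
    then show ?thesis
      using bs(2,4) cs wahl_dots_Cons_step[of c cs]
      by (intro exI[of _ "Suc c # cs @ [2]"]) auto
  qed
qed

section \<open>The position of the dot \<delta>\<close>

lemma sum_lessThan_nth_eq_sum_list_take:
  "m \<le> length xs \<Longrightarrow> (\<Sum>k<m. f (xs ! k)) = sum_list (map f (take m xs))"
  by (induction m) (simp_all add: take_Suc_conv_app_nth)

lemma dots_before_eq_dot_count:
  "i \<le> length bs \<Longrightarrow> dots_before bs i = dot_count (take i bs)"
  unfolding dots_before_def dot_count_def by (rule sum_lessThan_nth_eq_sum_list_take)

lemma delta_col_eq:
  "delta_row0 bs < length bs \<Longrightarrow>
   delta_col bs = sum_list (map (\<lambda>b. b - 2) (take (delta_row0 bs) bs)) + delta_in_row bs"
  unfolding delta_col_def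
  using sum_lessThan_nth_eq_sum_list_take[of "delta_row0 bs" bs "\<lambda>b. b - 2"] by simp

lemma delta_row_bounds:
  assumes "wahl_dots bs" and "bs \<noteq> []"
  shows "delta_row0 bs < length bs" and "delta_in_row bs + 2 \<le> bs ! delta_row0 bs"
proof -
  let ?r = "length bs" and ?i = "delta_row0 bs"
  let ?reached = "\<lambda>i. ?r + 1 \<le> dots_before bs (Suc i)"
  have "?reached (?r - 1)"
    using assms dots_before_eq_dot_count[of ?r bs] by (simp add: wahl_dots_def)
  then have "?i \<le> ?r - 1"
    unfolding delta_row0_def by (rule Least_le)
  moreover have "0 < ?r"
    using assms(2) by simp
  ultimately show row: "?i < ?r"
    by linarith
  have "?reached ?i"
    unfolding delta_row0_def by (rule LeastI) fact
  moreover have "dot_count (take (Suc ?i) bs) \<noteq> ?r + 1"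
    using assms(1) by (simp add: wahl_dots_def)
  ultimately have after: "?r + 1 < dot_count (take (Suc ?i) bs)"
    using row dots_before_eq_dot_count[of "Suc ?i" bs] by simp
  have before: "dot_count (take ?i bs) < ?r + 1"
  proof (cases ?i)
    case (Suc j)
    then have "\<not> ?reached j"
      unfolding delta_row0_def by (metis lessI not_less_Least)
    then show ?thesis
      using Suc row dots_before_eq_dot_count[of ?i bs] by simp
  qed simp
  have "dot_count (take (Suc ?i) bs) = dot_count (take ?i bs) + (bs ! ?i - 1)"
    using row by (simp add: take_Suc_conv_app_nth)
  moreover have "delta_in_row bs = ?r + 1 - dot_count (take ?i bs)"
    unfolding delta_in_row_def using row by (simp add: dots_before_eq_dot_count)
  ultimately show "delta_in_row bs + 2 \<le> bs ! ?i"
    using before after by linarith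
qed

section \<open>Dual chains\<close>

fun incr_hd :: "nat list \<Rightarrow> nat list" where
  "incr_hd [] = []"
| "incr_hd (y # ys) = Suc y # ys"

text \<open>Adding a row of b - 1 dots to the dot diagram adds one dot to the current last column and
  creates b - 2 new columns of one dot each; so, read backwards, foldl dual_step [1] bs is the
  dual chain [a_e, ..., a_1] of bs (columns with a_j - 1 dots).\<close>
definition dual_step :: "nat list \<Rightarrow> nat \<Rightarrow> nat list" where
  "dual_step Y b = replicate (b - 2) 2 @ incr_hd Y"

lemma length_incr_hd [simp]: "length (incr_hd Y) = length Y"
  by (cases Y) simp_all

lemma incr_hd_eq_Nil_iff [simp]: "incr_hd Y = [] \<longleftrightarrow> Y = []"
  by (cases Y) simp_all

lemma length_foldl_dual_step:
  "length (foldl dual_step Y bs) = length Y + sum_list (map (\<lambda>b. b - 2) bs)"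
  by (induction bs arbitrary: Y) (simp_all add: dual_step_def)

lemma foldl_dual_step_append:
  "\<exists>T'. length T' = length T \<and> foldl dual_step (Y @ T) bs = foldl dual_step Y bs @ T'"
proof (induction bs arbitrary: Y T)
  case (Cons b bs)
  let ?T = "if Y = [] then incr_hd T else T"
  have "dual_step (Y @ T) b = dual_step Y b @ ?T"
    by (cases Y) (simp_all add: dual_step_def)
  moreover obtain T' where "length T' = length ?T"
    "foldl dual_step (dual_step Y b @ ?T) bs = foldl dual_step (dual_step Y b) bs @ T'"
    using Cons.IH by blast
  ultimately show ?case
    by auto
qed auto

lemma foldl_dual_step_ne: "Y \<noteq> [] \<Longrightarrow> foldl dual_step Y bs \<noteq> []"
  by (induction bs arbitrary: Y) (simp_all add: dual_step_def)

lemma foldl_dual_step_ge_2: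
  "\<forall>y\<in>set Y. 2 \<le> y \<Longrightarrow> \<forall>y\<in>set (foldl dual_step Y bs). 2 \<le> y"
proof (induction bs arbitrary: Y)
  case (Cons b bs)
  then have "\<forall>y\<in>set (dual_step Y b). 2 \<le> y"
    by (cases Y) (auto simp: dual_step_def)
  then show ?case
    using Cons.IH by simp
qed simp

lemma foldl_dual_step_one_ge_2:
  assumes "bs \<noteq> []"
  shows "\<forall>y\<in>set (foldl dual_step [1] bs). 2 \<le> y"
proof -
  obtain b bs' where "bs = b # bs'"
    using assms by (cases bs) auto
  moreover have "\<forall>y\<in>set (dual_step [1] b). 2 \<le> y"
    by (simp add: dual_step_def)
  ultimately show ?thesis
    using foldl_dual_step_ge_2 by simp
qed

text \<open>The matrix form of blowing up the intersection point of two adjacent curves.\<close>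
lemma hj_mat_blowup: "hj_mat x * hj_mat y = hj_mat (Suc x) * hj_mat 1 * hj_mat (Suc y)"
  by (simp add: hj_mat_def algebra_simps)

lemma hj_prod_blowup:
  "hj_prod (Suc x # 1 # Suc y # Z) = hj_prod (x # y # Z)"
  using hj_mat_blowup[of x y] by (simp flip: mult.assoc)

lemma hj_prod_blowups_shift:
  "hj_prod ((c + k) # 1 # replicate k 2 @ Y) = hj_prod (c # 1 # Y)"
proof (induction k)
  case (Suc k)
  then show ?case
    using hj_prod_blowup[of "c + k" 1 "replicate k 2 @ Y"] by (simp add: numeral_2_eq_2)
qed simp

lemma hj_prod_dual_step:
  assumes "Y \<noteq> []" and "2 \<le> b"
  shows "hj_prod (b # 1 # dual_step Y b) = hj_prod (1 # Y)"
proof -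
  obtain y Y' where Y: "Y = y # Y'"
    using assms(1) by (cases Y) auto
  have "2 + (b - 2) = b"
    using assms(2) by simp
  then have "hj_prod (b # 1 # dual_step Y b) = hj_prod (2 # 1 # incr_hd Y)"
    using hj_prod_blowups_shift[of 2 "b - 2" "incr_hd Y"] by (simp only: dual_step_def)
  also have "\<dots> = hj_prod (1 # Y)"
    using hj_prod_blowup[of 1 y Y'] Y by (simp add: numeral_2_eq_2)
  finally show ?thesis .
qed

lemma hj_prod_dual_steps:
  "Y \<noteq> [] \<Longrightarrow> \<forall>b\<in>set bs. 2 \<le> b \<Longrightarrow> hj_prod (bs @ 1 # foldl dual_step Y bs) = hj_prod (1 # Y)"
proof (induction bs arbitrary: Y)
  case (Cons b bs)
  have "dual_step Y b \<noteq> []"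
    using Cons.prems(1) by (simp add: dual_step_def)
  with Cons show ?case
    using hj_prod_dual_step[of Y b] by (simp add: mult.assoc[symmetric])
qed simp

text \<open>Riemenschneider duality: the dual of n/a is n/(n - a).  The chain bs, a (-1)-curve and the
  reversed dual chain multiply to the matrix of [1, 1], which contracts to nothing.\<close>
lemma hj_rev_dual:
  assumes "bs \<noteq> []" and "\<forall>b\<in>set bs. 2 \<le> b" and "hj_prod bs = Mat2 n u a v"
  shows "hj (rev (foldl dual_step [1] bs)) = of_int n / of_int (n - a)"
proof -
  let ?Y = "foldl dual_step [1] bs" and ?G = "hj_prod bs * hj_mat 1"
  have "?G * hj_prod ?Y = hj_prod [1, 1]"
    using hj_prod_dual_steps[of "[1]" bs] assms(2) by (simp add: mult.assoc)
  moreover have "det2 ?G = 1"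
    using det2_hj_prod[of "bs @ [1]"] by simp
  ultimately have "hj_prod ?Y = adj2 ?G * hj_prod [1, 1]"
    using adj2_mult_cancel[of ?G "hj_prod ?Y"] by simp
  then have "hj_prod (rev ?Y) = Mat2 n (- (n + u)) (n - a) (a + v - n - u)"
    unfolding hj_prod_rev assms(3) by (simp add: hj_mat_def one_mat2_def algebra_simps)
  moreover have "?Y \<noteq> []"
    by (simp add: foldl_dual_step_ne)
  moreover have "\<forall>y\<in>set ?Y. 2 \<le> y"
    using foldl_dual_step_one_ge_2[OF assms(1)] .
  ultimately show ?thesis
    using hj_prod_ratio[of "rev ?Y"] by simp
qed

section \<open>Blow-ups of linear chains\<close>

fun path_edges :: "nat list \<Rightarrow> nat set set" where
  "path_edges (u # v # vs) = insert {u, v} (path_edges (v # vs))"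
| "path_edges _ = {}"

lemma path_edges_conv_nth:
  "path_edges vs = {{vs ! i, vs ! Suc i} | i. Suc i < length vs}"
proof (induction vs rule: path_edges.induct)
  case (1 u v vs)
  have "{{(u # v # vs) ! i, (u # v # vs) ! Suc i} | i. Suc i < length (u # v # vs)} =
        insert {u, v} {{(v # vs) ! i, (v # vs) ! Suc i} | i. Suc i < length (v # vs)}"
    (is "?L = ?R")
  proof
    show "?L \<subseteq> ?R"
      by (clarify, case_tac i) auto
    show "?R \<subseteq> ?L"
      by (auto intro: exI[of _ 0] exI[of _ "Suc _"])
  qed
  with 1 show ?case
    by simp
qed auto

lemma path_edges_upt: "path_edges [0..<n] = {{i, Suc i} | i. Suc i < n}"
  unfolding path_edges_conv_nth by (force simp del: upt_Suc)

lemma path_edges_append: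
  "path_edges (vs @ v # ws) =
     (if vs = [] then {} else {{last vs, v}}) \<union> path_edges vs \<union> path_edges (v # ws)"
  by (induction vs rule: path_edges.induct) auto

lemma path_edges_subset: "e \<in> path_edges vs \<Longrightarrow> e \<subseteq> set vs"
  by (induction vs rule: path_edges.induct) auto

definition chain_reachable :: "nat list \<Rightarrow> nat list \<Rightarrow> bool" where
  "chain_reachable L0 L \<longleftrightarrow> (\<exists>vs w. distinct vs \<and> map w vs = map (\<lambda>b. - int b) L \<and>
      blowup_step\<^sup>*\<^sup>* (chain_config L0) (set vs, w, path_edges vs))"

lemma chain_reachable_refl: "chain_reachable L L"
proof -
  let ?n = "length L"
  have "chain_config L = (set [0..<?n], (\<lambda>i. - int (L ! i)), path_edges [0..<?n])"
    unfolding chain_config_def path_edges_upt by simp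
  moreover have "map (\<lambda>i. - int (L ! i)) [0..<?n] = map (\<lambda>b. - int b) L"
    by (rule nth_equalityI) simp_all
  ultimately show ?thesis
    unfolding chain_reachable_def by (intro exI[of _ "[0..<?n]"] exI[of _ "\<lambda>i. - int (L ! i)"]) simp
qed

lemma exists_fresh_vertex: "\<exists>u::nat. u \<notin> set vs"
  using finite_list infinite_UNIV_nat ex_new_if_finite by blast

lemma chain_reachable_blowup_end:
  assumes "chain_reachable L0 (X @ [x])"
  shows "chain_reachable L0 (X @ [Suc x, 1])"
proof -
  obtain vs w where vs: "distinct vs" "map w vs = map (\<lambda>b. - int b) (X @ [x])"
    "blowup_step\<^sup>*\<^sup>* (chain_config L0) (set vs, w, path_edges vs)"
    using assms unfolding chain_reachable_def by blast
  then obtain P v where P: "vs = P @ [v]" "map w P = map (\<lambda>b. - int b) X" "w v = - int x"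
    by (auto simp: map_eq_append_conv)
  obtain u where u: "u \<notin> set vs"
    using exists_fresh_vertex by blast
  let ?vs = "P @ [v, u]" and ?w = "w(v := w v - 1, u := -1)"
  have "blowup_step (set vs, w, path_edges vs) (insert u (set vs), ?w, insert {v, u} (path_edges vs))"
    using P u by (intro blowup_step.at_point) simp_all
  moreover have "set ?vs = insert u (set vs)" "path_edges ?vs = insert {v, u} (path_edges vs)"
    using P path_edges_append[of P v "[u]"] path_edges_append[of P v "[]"] by auto
  ultimately have "blowup_step\<^sup>*\<^sup>* (chain_config L0) (set ?vs, ?w, path_edges ?vs)"
    using vs(3) by simp
  moreover have "distinct ?vs" "map ?w ?vs = map (\<lambda>b. - int b) (X @ [Suc x, 1])"
    using vs(1) u P by auto
  ultimately show ?thesis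
    unfolding chain_reachable_def by blast
qed

lemma chain_reachable_blowup_edge:
  assumes "chain_reachable L0 (X @ x # y # Z)"
  shows "chain_reachable L0 (X @ Suc x # 1 # Suc y # Z)"
proof -
  obtain vs w where vs: "distinct vs" "map w vs = map (\<lambda>b. - int b) (X @ x # y # Z)"
    "blowup_step\<^sup>*\<^sup>* (chain_config L0) (set vs, w, path_edges vs)"
    using assms unfolding chain_reachable_def by blast
  then obtain P v v' S where P: "vs = P @ v # v' # S" "map w P = map (\<lambda>b. - int b) X"
    "w v = - int x" "w v' = - int y" "map w S = map (\<lambda>b. - int b) Z"
    by (auto simp: map_eq_append_conv map_eq_Cons_conv)
  obtain u where u: "u \<notin> set vs"
    using exists_fresh_vertex by blast
  let ?vs = "P @ v # u # v' # S" and ?w = "w(v := w v - 1, v' := w v' - 1, u := -1)"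
  have old: "path_edges vs =
      (if P = [] then {} else {{last P, v}}) \<union> path_edges P \<union> insert {v, v'} (path_edges (v' # S))"
    using P path_edges_append[of P v "v' # S"] by simp
  have "blowup_step (set vs, w, path_edges vs) (insert u (set vs), ?w,
      insert {v, u} (insert {u, v'} (path_edges vs - {{v, v'}})))"
    using P u vs(1) old by (intro blowup_step.at_intersection) auto
  moreover have "{v, v'} \<notin> path_edges P \<union> path_edges (v' # S)"
    and "P \<noteq> [] \<Longrightarrow> {last P, v} \<noteq> {v, v'}"
    using path_edges_subset[of "{v, v'}" P] path_edges_subset[of "{v, v'}" "v' # S"]
      vs(1) P last_in_set[of P] by (auto simp: doubleton_eq_iff)
  then have "path_edges ?vs = insert {v, u} (insert {u, v'} (path_edges vs - {{v, v'}}))"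
    using old path_edges_append[of P v "u # v' # S"] by auto
  moreover have "set ?vs = insert u (set vs)"
    using P by auto
  ultimately have "blowup_step\<^sup>*\<^sup>* (chain_config L0) (set ?vs, ?w, path_edges ?vs)"
    using vs(3) by simp
  moreover have "distinct ?vs" "map ?w ?vs = map (\<lambda>b. - int b) (X @ Suc x # 1 # Suc y # Z)"
    using vs(1) u P by auto
  ultimately show ?thesis
    unfolding chain_reachable_def by blast
qed

lemma chain_reachable_config_iso:
  assumes "chain_reachable L0 L"
  shows "\<exists>C. blowup_step\<^sup>*\<^sup>* (chain_config L0) C \<and> config_iso C (chain_config L)"
proof -
  obtain vs w where vs: "distinct vs" "map w vs = map (\<lambda>b. - int b) L"
    "blowup_step\<^sup>*\<^sup>* (chain_config L0) (set vs, w, path_edges vs)"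
    using assms unfolding chain_reachable_def by blast
  let ?n = "length L" and ?f = "inv_into {0..<length L} ((!) vs)"
  have len: "length vs = ?n"
    using map_eq_imp_length_eq[OF vs(2)] .
  have bij: "bij_betw ((!) vs) {0..<?n} (set vs)"
    using bij_betw_nth[OF vs(1)] len by (simp add: lessThan_atLeast0)
  have f_nth: "?f (vs ! i) = i" if "i < ?n" for i
    using bij that by (simp add: bij_betw_inv_into_left)
  have weight: "w (vs ! i) = - int (L ! i)" if "i < ?n" for i
    using arg_cong[OF vs(2), of "\<lambda>l. l ! i"] len that by simp
  have edge: "{vs ! i, vs ! j} \<in> path_edges vs \<longleftrightarrow> (\<exists>k. {i, j} = {k, Suc k} \<and> Suc k < ?n)"
    if "i < ?n" "j < ?n" for i j
    using that len nth_eq_iff_index_eq[OF vs(1)]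
    by (auto simp: path_edges_conv_nth doubleton_eq_iff)
  have "config_iso (set vs, w, path_edges vs) (chain_config L)"
    unfolding config_iso_def chain_config_def
  proof (simp, intro exI[of _ ?f] conjI ballI)
    show "bij_betw ?f (set vs) {0..<?n}"
      by (rule bij_betw_inv_into[OF bij])
    fix a b assume "a \<in> set vs" "b \<in> set vs"
    then obtain i j where "i < ?n" "j < ?n" "a = vs ! i" "b = vs ! j"
      using len by (auto simp: in_set_conv_nth)
    then show "- int (L ! ?f a) = w a"
      and "{a, b} \<in> path_edges vs \<longleftrightarrow> (\<exists>k. {?f a, ?f b} = {k, Suc k} \<and> Suc k < ?n)"
      using f_nth weight edge by simp_all
  qed
  then show ?thesis
    using vs(3) by blast
qed

text \<open>The blow-ups of a linear chain that keep it linear: at a free point of the last curve, or at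
  the intersection point of two adjacent curves.  Entries are the negated self-intersections.\<close>
inductive chain_blowup :: "nat list \<Rightarrow> nat list \<Rightarrow> bool" where
  at_end: "chain_blowup (X @ [x]) (X @ [Suc x, 1])"
| at_edge: "chain_blowup (X @ x # y # Z) (X @ Suc x # 1 # Suc y # Z)"

lemma chain_reachable_chain_blowups:
  "chain_blowup\<^sup>*\<^sup>* L L' \<Longrightarrow> chain_reachable L0 L \<Longrightarrow> chain_reachable L0 L'"
proof (induction rule: rtranclp_induct)
  case (step L' L'')
  from step.hyps(2) step.IH[OF step.prems] show ?case
    by cases (blast intro: chain_reachable_blowup_end chain_reachable_blowup_edge)+
qed

lemma chain_blowups_shift:
  "chain_blowup\<^sup>*\<^sup>* (X @ c # 1 # Y) (X @ (c + k) # 1 # replicate k 2 @ Y)"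
proof (induction k)
  case (Suc k)
  have "chain_blowup (X @ (c + k) # 1 # replicate k 2 @ Y) (X @ Suc (c + k) # 1 # 2 # replicate k 2 @ Y)"
    using chain_blowup.at_edge[of X "c + k" 1] by (simp add: numeral_2_eq_2)
  with Suc show ?case
    by simp
qed simp

lemma chain_blowups_dual_step:
  assumes "2 \<le> b"
  shows "chain_blowup\<^sup>*\<^sup>* (X @ 1 # Y) (X @ b # 1 # dual_step Y b)"
proof -
  have "chain_blowup (X @ 1 # Y) (X @ 2 # 1 # incr_hd Y)"
    using chain_blowup.at_end[of X 1] chain_blowup.at_edge[of X 1]
    by (cases Y) (simp_all add: numeral_2_eq_2)
  moreover have "2 + (b - 2) = b"
    using assms by simp
  ultimately show ?thesis
    using chain_blowups_shift[of X 2 "incr_hd Y" "b - 2"] by (simp add: dual_step_def)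
qed

lemma chain_blowups_dual_steps:
  "\<forall>b\<in>set bs. 2 \<le> b \<Longrightarrow> chain_blowup\<^sup>*\<^sup>* (X @ 1 # Y) (X @ bs @ 1 # foldl dual_step Y bs)"
proof (induction bs arbitrary: X Y)
  case (Cons b bs)
  then have "chain_blowup\<^sup>*\<^sup>* (X @ b # 1 # dual_step Y b) (X @ (b # bs) @ 1 # foldl dual_step Y (b # bs))"
    using Cons.IH[of "X @ [b]" "dual_step Y b"] by simp
  with chain_blowups_dual_step[of b X Y] Cons.prems show ?case
    by simp
qed simp

lemma chain_blowups_from_half_row:
  assumes "i < length bs" and "d + 2 \<le> bs ! i" and "\<forall>b\<in>set bs. 2 \<le> b"
  shows "chain_blowup\<^sup>*\<^sup>* (take i bs @ [d + 1])
           (bs @ 1 # foldl dual_step (replicate (bs ! i - d - 2) 2) (drop (Suc i) bs))"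
proof -
  let ?k = "bs ! i - d - 2" and ?rows = "drop (Suc i) bs"
  have "d + 2 + ?k = bs ! i"
    using assms(2) by simp
  have "chain_blowup\<^sup>*\<^sup>* (take i bs @ [d + 1]) (take i bs @ [d + 2, 1])"
    using chain_blowup.at_end[of "take i bs" "d + 1"] by simp
  also have "chain_blowup\<^sup>*\<^sup>* \<dots> (take i bs @ bs ! i # 1 # replicate ?k 2)"
    using chain_blowups_shift[of "take i bs" "d + 2" "[]" ?k] \<open>d + 2 + ?k = bs ! i\<close>
    by (simp only: append_Nil2)
  also have "chain_blowup\<^sup>*\<^sup>* \<dots> (bs @ 1 # foldl dual_step (replicate ?k 2) ?rows)"
  proof -
    have "chain_blowup\<^sup>*\<^sup>* (take i bs @ bs ! i # 1 # replicate ?k 2)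
        (((take i bs @ [bs ! i]) @ ?rows) @ 1 # foldl dual_step (replicate ?k 2) ?rows)"
      using chain_blowups_dual_steps[of ?rows "take i bs @ [bs ! i]"] assms(3)
      by (simp add: in_set_dropD)
    moreover have "(take i bs @ [bs ! i]) @ ?rows = bs"
      using assms(1) by (simp add: id_take_nth_drop[symmetric])
    ultimately show ?thesis
      by (simp only:)
  qed
  finally show ?thesis .
qed

lemma foldl_dual_step_split_at_row:
  assumes "i < length bs" and "d + 2 \<le> bs ! i"
  shows "\<exists>T. foldl dual_step [1] bs = foldl dual_step (replicate (bs ! i - d - 2) 2) (drop (Suc i) bs) @ T \<and>
             length T = d + 1 + sum_list (map (\<lambda>b. b - 2) (take i bs))"
proof -
  let ?Y = "foldl dual_step [1] (take i bs)"
  have "bs = take i bs @ bs ! i # drop (Suc i) bs"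
    using assms(1) by (simp add: id_take_nth_drop)
  then have "foldl dual_step [1] bs = foldl dual_step (dual_step ?Y (bs ! i)) (drop (Suc i) bs)"
    by (metis foldl_Cons foldl_append)
  also have "dual_step ?Y (bs ! i) = replicate (bs ! i - d - 2) 2 @ replicate d 2 @ incr_hd ?Y"
    using assms(2) by (simp add: dual_step_def replicate_add[symmetric])
  finally show ?thesis
    using foldl_dual_step_append[where Y = "replicate (bs ! i - d - 2) 2" and T = "replicate d 2 @ incr_hd ?Y"]
    by (auto simp: length_foldl_dual_step)
qed

lemma hj_wahl_chain:
  fixes p q :: nat
  assumes "coprime p q" and "1 \<le> q" and "q < p"
    and "bs \<noteq> []" and "\<forall>b\<in>set bs. 2 \<le> b" and "hj bs = of_nat (p\<^sup>2) / of_nat (p * q - 1)"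
  shows "hj_prod bs = wahl_matrix (int p) (int q) \<and> wahl_dots bs"
proof -
  obtain cs where cs: "cs \<noteq> []" "\<forall>c\<in>set cs. 2 \<le> c" "hj_prod cs = wahl_matrix (int p) (int q)" "wahl_dots cs"
    using wahl_chain_exists[OF assms(1-3)] by blast
  have "hj cs = of_int (int p ^ 2) / of_int (int p * int q - 1)"
    using hj_prod_ratio[OF cs(1,2)] cs(3) by (simp add: wahl_matrix_def)
  also have "\<dots> = hj bs"
    using assms(2,3,6) by (simp add: of_nat_diff)
  finally have "bs = cs"
    using hj_inj[OF assms(4,5) cs(1,2)] by simp
  then show ?thesis
    using cs by simp
qed

lemma hj_rev_dual_wahl_chain:
  fixes p q :: nat
  assumes "bs \<noteq> []" and "\<forall>b\<in>set bs. 2 \<le> b" and "hj_prod bs = wahl_matrix (int p) (int q)"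
    and "q \<le> p" and "as \<noteq> []" and "\<forall>a\<in>set as. 2 \<le> a"
    and "hj as = of_nat (p\<^sup>2) / of_nat (p\<^sup>2 - p * q + 1)"
  shows "as = rev (foldl dual_step [1] bs)"
proof -
  have "p * q \<le> p\<^sup>2"
    using assms(4) by (simp add: power2_eq_square)
  then have "hj (rev (foldl dual_step [1] bs)) = hj as"
    using hj_rev_dual[OF assms(1,2)] assms(3,7) by (simp add: wahl_matrix_def of_nat_diff)
  then show ?thesis
    using hj_inj[OF assms(5,6)] foldl_dual_step_ne foldl_dual_step_one_ge_2[OF assms(1)] by simp
qed

theorem corollary3p13:
  fixes p q :: nat and bs as :: "nat list"
  assumes "coprime p q" and "1 \<le> q" and "q < p"
    and "bs \<noteq> []" and "\<forall>b\<in>set bs. 2 \<le> b"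
    and "hj bs = of_nat (p^2) / of_nat (p * q - 1)"
    and "as \<noteq> []" and "\<forall>a\<in>set as. 2 \<le> a"
    and "hj as = of_nat (p^2) / of_nat (p^2 - p * q + 1)"
  shows "\<exists>C. blowup_step\<^sup>*\<^sup>* (chain_config (half_chain bs)) C \<and>
             config_iso C (chain_config (bs @ [1] @ rev (drop (delta_col bs + 1) as)))"
proof -
  obtain wahl: "hj_prod bs = wahl_matrix (int p) (int q)" "wahl_dots bs"
    using hj_wahl_chain[OF assms(1-6)] by blast
  have as: "as = rev (foldl dual_step [1] bs)"
    using hj_rev_dual_wahl_chain[OF assms(4,5) wahl(1) _ assms(7-9)] assms(3) by simp
  define i d where "i = delta_row0 bs" and "d = delta_in_row bs"
  have row: "i < length bs" "d + 2 \<le> bs ! i"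
    using delta_row_bounds[OF wahl(2) assms(4)] unfolding i_def d_def by auto
  let ?Y = "foldl dual_step (replicate (bs ! i - d - 2) 2) (drop (Suc i) bs)"
  obtain T where T: "foldl dual_step [1] bs = ?Y @ T" "length T = delta_col bs + 1"
    using foldl_dual_step_split_at_row[OF row] delta_col_eq[of bs] row(1) unfolding i_def d_def by auto
  have "chain_blowup\<^sup>*\<^sup>* (half_chain bs) (bs @ [1] @ rev (drop (delta_col bs + 1) as))"
    using chain_blowups_from_half_row[OF row assms(5)] as T
    unfolding half_chain_def i_def d_def by simp
  then show ?thesis
    using chain_reachable_config_iso chain_reachable_chain_blowups chain_reachable_refl by blast
qed

end
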